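(* Let $G=(V,E)$ be a finite graph with special vertex $i$, symmetric edge weights $w_E$ (with $w_E(u,v)=0$ for $uv\notin E$) and vertex weights $w_V$ (nonnegative, not identically zero), such that $G$ and $G-i$ are each positively connected. Let $f_i$ be a solution of $$\min_{\|g\|_w=1,\ g(i)=0}\ \sum_{jk\in E} w_E(j,k)\,(g(k)-g(j))^2,$$ positive on $V\setminus\{i\}$. Fix vertices $j,k$ with $jk\in E$ such that $G-j$ is not connected and $i$ and $k$ lie in different components of $G-j$, and suppose $w_V(k)>0$. Then $j$ is the unique vertex $z\in N(k)$ satisfying $f_i(z)=\min_{z'\in N(k)}f_i(z')$.
   Context: $\|g\|_w=\sqrt{\sum_{u\in V}w_V(u)g(u)^2}$; each edge is counted once. A weighted graph is positively connected if any two vertices are joined by a path of positive-weight edges; $G-x$ is $G$ with vertex $x$ deleted. Edges of weight zero are regarded as deleted, so neighborhoods $N(u)$, the edge $jk$, and connectivity refer to positive-weight edges. *)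

theory Defs
  imports Main "HOL-Analysis.Analysis"
begin

text \<open>A finite weighted graph: vertex set V, symmetric nonnegative edge weights wE
  (zero off V, no loops), nonnegative vertex weights wV. Edges of weight zero are deleted.\<close>

definition weighted_graph :: "'a set \<Rightarrow> ('a \<Rightarrow> 'a \<Rightarrow> real) \<Rightarrow> ('a \<Rightarrow> real) \<Rightarrow> bool" where
  "weighted_graph V wE wV \<longleftrightarrow> finite V
     \<and> (\<forall>u v. wE u v = wE v u) \<and> (\<forall>u v. wE u v \<ge> 0)
     \<and> (\<forall>u v. (u \<notin> V \<or> v \<notin> V) \<longrightarrow> wE u v = 0) \<and> (\<forall>u. wE u u = 0)
     \<and> (\<forall>u. wV u \<ge> 0) \<and> (\<exists>u\<in>V. wV u \<noteq> 0)"

definition pos_edges :: "'a set \<Rightarrow> ('a \<Rightarrow> 'a \<Rightarrow> real) \<Rightarrow> ('a \<times> 'a) set" where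
  "pos_edges S wE = {(u, v). u \<in> S \<and> v \<in> S \<and> wE u v > 0}"

definition same_component :: "'a set \<Rightarrow> ('a \<Rightarrow> 'a \<Rightarrow> real) \<Rightarrow> 'a \<Rightarrow> 'a \<Rightarrow> bool" where
  "same_component S wE u v \<longleftrightarrow> u \<in> S \<and> v \<in> S \<and> (u, v) \<in> (pos_edges S wE)\<^sup>*"

definition pos_connected :: "'a set \<Rightarrow> ('a \<Rightarrow> 'a \<Rightarrow> real) \<Rightarrow> bool" where
  "pos_connected S wE \<longleftrightarrow> (\<forall>u\<in>S. \<forall>v\<in>S. same_component S wE u v)"

definition nbhd :: "('a \<Rightarrow> 'a \<Rightarrow> real) \<Rightarrow> 'a set \<Rightarrow> 'a \<Rightarrow> 'a set" where
  "nbhd wE V u = {v \<in> V. wE u v > 0}"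

text \<open>Weighted norm and Dirichlet energy (each edge counted once).\<close>
definition wnorm :: "'a set \<Rightarrow> ('a \<Rightarrow> real) \<Rightarrow> ('a \<Rightarrow> real) \<Rightarrow> real" where
  "wnorm V wV g = sqrt (\<Sum>u\<in>V. wV u * (g u)\<^sup>2)"

definition energy :: "'a set \<Rightarrow> ('a \<Rightarrow> 'a \<Rightarrow> real) \<Rightarrow> ('a \<Rightarrow> real) \<Rightarrow> real" where
  "energy V wE g = (1/2) * (\<Sum>u\<in>V. \<Sum>v\<in>V. wE u v * (g v - g u)\<^sup>2)"

definition is_minimizer :: "'a set \<Rightarrow> ('a \<Rightarrow> 'a \<Rightarrow> real) \<Rightarrow> ('a \<Rightarrow> real) \<Rightarrow> 'a \<Rightarrow> ('a \<Rightarrow> real) \<Rightarrow> bool" where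
  "is_minimizer V wE wV i f \<longleftrightarrow> wnorm V wV f = 1 \<and> f i = 0
     \<and> (\<forall>g. wnorm V wV g = 1 \<and> g i = 0 \<longrightarrow> energy V wE f \<le> energy V wE g)"

end

theory Submission
  imports Defs
begin

(* Comparing the minimizer f with f + t h for h vanishing at i gives the Euler-Lagrange equation
   L f = \<lambda> wV f on V - {i}, where L is the graph Laplacian and \<lambda> = energy f, which is positive
   because G is connected.  Hence f is superharmonic on the component C of k in G - j, strictly
   so at k, and i is not in C.  If min f on C were at most f j, the set of minimum points in C
   would be closed under the edges of G - j (a superharmonic function is constant around a
   local minimum), so it would contain k, where L f > 0 rules out a local minimum.  So f > f j on
   C, which contains every neighbour of k except j. *)


definition laplacian :: "'a set \<Rightarrow> ('a \<Rightarrow> 'a \<Rightarrow> real) \<Rightarrow> ('a \<Rightarrow> real) \<Rightarrow> 'a \<Rightarrow> real" where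
  "laplacian V wE g x = (\<Sum>v\<in>V. wE x v * (g x - g v))"

definition energy_form :: "'a set \<Rightarrow> ('a \<Rightarrow> 'a \<Rightarrow> real) \<Rightarrow> ('a \<Rightarrow> real) \<Rightarrow> ('a \<Rightarrow> real) \<Rightarrow> real" where
  "energy_form V wE g h = (1/2) * (\<Sum>u\<in>V. \<Sum>v\<in>V. wE u v * ((g v - g u) * (h v - h u)))"

lemma energy_add_scaled:
  "energy V wE (\<lambda>u. f u + t * h u)
     = energy V wE f + 2 * t * energy_form V wE f h + t\<^sup>2 * energy V wE h"
proof -
  have "wE u v * ((f v + t * h v) - (f u + t * h u))\<^sup>2
      = wE u v * (f v - f u)\<^sup>2 + 2 * t * (wE u v * ((f v - f u) * (h v - h u)))
        + t\<^sup>2 * (wE u v * (h v - h u)\<^sup>2)" for u v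
    by (simp add: power2_eq_square algebra_simps)
  then have "(\<Sum>u\<in>V. \<Sum>v\<in>V. wE u v * ((f v + t * h v) - (f u + t * h u))\<^sup>2)
      = (\<Sum>u\<in>V. \<Sum>v\<in>V. wE u v * (f v - f u)\<^sup>2)
        + 2 * t * (\<Sum>u\<in>V. \<Sum>v\<in>V. wE u v * ((f v - f u) * (h v - h u)))
        + t\<^sup>2 * (\<Sum>u\<in>V. \<Sum>v\<in>V. wE u v * (h v - h u)\<^sup>2)"
    by (simp only: sum.distrib sum_distrib_left)
  then show ?thesis unfolding energy_def energy_form_def by (simp add: algebra_simps)
qed

lemma weighted_sum_sq_add_scaled:
  fixes c f h :: "'a \<Rightarrow> real"
  shows "(\<Sum>u\<in>V. c u * (f u + t * h u)\<^sup>2)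
     = (\<Sum>u\<in>V. c u * (f u)\<^sup>2) + 2 * t * (\<Sum>u\<in>V. c u * f u * h u) + t\<^sup>2 * (\<Sum>u\<in>V. c u * (h u)\<^sup>2)"
proof -
  have "c u * (f u + t * h u)\<^sup>2 = c u * (f u)\<^sup>2 + 2 * t * (c u * f u * h u) + t\<^sup>2 * (c u * (h u)\<^sup>2)" for u
    by (simp add: power2_eq_square algebra_simps)
  then show ?thesis by (simp add: sum.distrib sum_distrib_left)
qed

lemma energy_mult_left: "energy V wE (\<lambda>u. c * g u) = c\<^sup>2 * energy V wE g"
proof -
  have "wE u v * (c * g v - c * g u)\<^sup>2 = c\<^sup>2 * (wE u v * (g v - g u)\<^sup>2)" for u v
    by (simp add: power2_eq_square algebra_simps)
  then show ?thesis unfolding energy_def by (simp only: sum_distrib_left) (simp add: algebra_simps)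
qed

lemma energy_nonneg:
  assumes "\<forall>u v. wE u v \<ge> 0"
  shows "energy V wE g \<ge> 0"
  unfolding energy_def using assms by (intro mult_nonneg_nonneg sum_nonneg) auto

lemma energy_form_eq_sum_laplacian:
  assumes sym: "\<forall>u v. wE u v = wE v u"
  shows "energy_form V wE g h = (\<Sum>u\<in>V. h u * laplacian V wE g u)"
proof -
  have swap: "(\<Sum>u\<in>V. \<Sum>v\<in>V. wE u v * (g v - g u) * h v) = (\<Sum>u\<in>V. \<Sum>v\<in>V. wE u v * (g u - g v) * h u)"
    using sym by (subst sum.swap) (simp add: mult.commute)
  have neg: "(\<Sum>u\<in>V. \<Sum>v\<in>V. wE u v * (g v - g u) * h u) = - (\<Sum>u\<in>V. \<Sum>v\<in>V. wE u v * (g u - g v) * h u)"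
    by (simp add: sum_negf[symmetric] algebra_simps)
  have "energy_form V wE g h
      = (1/2) * ((\<Sum>u\<in>V. \<Sum>v\<in>V. wE u v * (g v - g u) * h v) - (\<Sum>u\<in>V. \<Sum>v\<in>V. wE u v * (g v - g u) * h u))"
    unfolding energy_form_def by (simp add: sum_subtractf[symmetric] algebra_simps)
  also have "\<dots> = (\<Sum>u\<in>V. \<Sum>v\<in>V. wE u v * (g u - g v) * h u)"
    unfolding swap neg by simp
  also have "\<dots> = (\<Sum>u\<in>V. h u * laplacian V wE g u)"
    unfolding laplacian_def by (simp add: sum_distrib_left algebra_simps)
  finally show ?thesis .
qed

lemma quadratic_nonneg_imp_linear_coeff_zero:
  fixes p q :: real
  assumes "\<forall>t. 0 \<le> 2 * t * p + t\<^sup>2 * q"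
  shows "p = 0"
proof -
  define s where "s = \<bar>q\<bar> + 1"
  have s: "s > 0" "q < 2 * s" unfolding s_def by auto
  have "0 \<le> 2 * (- p / s) * p + (- p / s)\<^sup>2 * q" using assms by blast
  then have "0 \<le> p\<^sup>2 * (q - 2 * s)"
    using s by (simp add: power2_eq_square field_simps)
  then show ?thesis using s by (simp add: zero_le_mult_iff)
qed

lemma minimizer_sum_sq:
  assumes "is_minimizer V wE wV i f"
  shows "(\<Sum>u\<in>V. wV u * (f u)\<^sup>2) = 1"
proof -
  have "sqrt (\<Sum>u\<in>V. wV u * (f u)\<^sup>2) = 1"
    using assms unfolding is_minimizer_def wnorm_def by simp
  then show ?thesis by simp
qed

lemma minimizer_rayleigh:
  assumes fmin: "is_minimizer V wE wV i f" and gi: "g i = 0"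
    and wE: "\<forall>u v. wE u v \<ge> 0"
  shows "energy V wE f * (\<Sum>u\<in>V. wV u * (g u)\<^sup>2) \<le> energy V wE g"
proof (cases "(\<Sum>u\<in>V. wV u * (g u)\<^sup>2) > 0")
  case False
  then show ?thesis
    using energy_nonneg[OF wE, of V f] energy_nonneg[OF wE, of V g]
    by (meson mult_nonneg_nonpos not_less order_trans)
next
  case True
  define N where "N = (\<Sum>u\<in>V. wV u * (g u)\<^sup>2)"
  have N: "N > 0" using True unfolding N_def .
  define c where "c = 1 / sqrt N"
  have c2: "c\<^sup>2 = 1 / N" using N by (simp add: c_def power_divide)
  have "(\<Sum>u\<in>V. wV u * (c * g u)\<^sup>2) = c\<^sup>2 * N"
    unfolding N_def by (simp add: sum_distrib_left power_mult_distrib algebra_simps)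
  then have "wnorm V wV (\<lambda>u. c * g u) = 1" using c2 N unfolding wnorm_def by simp
  then have "energy V wE f \<le> energy V wE (\<lambda>u. c * g u)"
    using fmin gi unfolding is_minimizer_def by simp
  also have "\<dots> = energy V wE g / N" using c2 by (simp add: energy_mult_left)
  finally show ?thesis using N by (simp add: N_def[symmetric] pos_le_divide_eq)
qed

lemma minimizer_first_variation:
  assumes fmin: "is_minimizer V wE wV i f" and hi: "h i = 0"
    and wE: "\<forall>u v. wE u v \<ge> 0"
  shows "energy_form V wE f h = energy V wE f * (\<Sum>u\<in>V. wV u * f u * h u)"
proof -
  define lam where "lam = energy V wE f"
  have "0 \<le> 2 * t * (energy_form V wE f h - lam * (\<Sum>u\<in>V. wV u * f u * h u))
          + t\<^sup>2 * (energy V wE h - lam * (\<Sum>u\<in>V. wV u * (h u)\<^sup>2))" for t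
  proof -
    have "f i + t * h i = 0" using fmin hi unfolding is_minimizer_def by simp
    from minimizer_rayleigh[OF fmin, of "\<lambda>u. f u + t * h u", OF this wE]
    have "lam * (\<Sum>u\<in>V. wV u * (f u + t * h u)\<^sup>2) \<le> energy V wE (\<lambda>u. f u + t * h u)"
      unfolding lam_def .
    then show ?thesis
      unfolding weighted_sum_sq_add_scaled energy_add_scaled minimizer_sum_sq[OF fmin] lam_def
      by (simp add: algebra_simps)
  qed
  then show ?thesis
    using quadratic_nonneg_imp_linear_coeff_zero unfolding lam_def by fastforce
qed

lemma minimizer_euler_lagrange:
  assumes fmin: "is_minimizer V wE wV i f"
    and fin: "finite V" and sym: "\<forall>u v. wE u v = wE v u" and wE: "\<forall>u v. wE u v \<ge> 0"
    and x: "x \<in> V" "x \<noteq> i"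
  shows "laplacian V wE f x = energy V wE f * wV x * f x"
proof -
  define h :: "'a \<Rightarrow> real" where "h u = (if u = x then 1 else 0)" for u
  have "energy_form V wE f h = laplacian V wE f x"
    unfolding energy_form_eq_sum_laplacian[OF sym] h_def using fin x
    by (simp add: if_distrib[of "\<lambda>c. c * _"] cong: if_cong)
  moreover have "(\<Sum>u\<in>V. wV u * f u * h u) = wV x * f x"
    unfolding h_def using fin x by (simp add: if_distrib cong: if_cong)
  moreover have "h i = 0" using x unfolding h_def by simp
  ultimately show ?thesis using minimizer_first_variation[OF fmin _ wE, of h] by simp
qed

lemma energy_eq_0_imp_edge_eq:
  assumes fin: "finite V" and wE: "\<forall>u v. wE u v \<ge> 0"
    and E0: "energy V wE g = 0" and e: "(u, v) \<in> pos_edges V wE"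
  shows "g u = g v"
proof -
  have uv: "u \<in> V" "v \<in> V" "wE u v > 0" using e unfolding pos_edges_def by auto
  have terms: "\<forall>x\<in>V. \<forall>y\<in>V. wE x y * (g y - g x)\<^sup>2 \<ge> 0" using wE by simp
  have "(\<Sum>x\<in>V. \<Sum>y\<in>V. wE x y * (g y - g x)\<^sup>2) = 0" using E0 unfolding energy_def by simp
  then have "\<forall>x\<in>V. (\<Sum>y\<in>V. wE x y * (g y - g x)\<^sup>2) = 0"
    using terms fin by (simp add: sum_nonneg sum_nonneg_eq_0_iff)
  then show ?thesis
    using terms fin uv by (force simp: sum_nonneg_eq_0_iff)
qed

lemma energy_eq_0_imp_rtrancl_eq:
  assumes fin: "finite V" and wE: "\<forall>u v. wE u v \<ge> 0"
    and E0: "energy V wE g = 0" and p: "(u, v) \<in> (pos_edges V wE)\<^sup>*"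
  shows "g u = g v"
  using p by induction (auto dest: energy_eq_0_imp_edge_eq[OF fin wE E0])

lemma minimizer_energy_pos:
  assumes fmin: "is_minimizer V wE wV i f"
    and fin: "finite V" and wE: "\<forall>u v. wE u v \<ge> 0"
    and conn: "pos_connected V wE" and iV: "i \<in> V"
  shows "energy V wE f > 0"
proof (rule ccontr)
  assume "\<not> energy V wE f > 0"
  then have E0: "energy V wE f = 0" using energy_nonneg[OF wE, of V f] by linarith
  have "f u = 0" if "u \<in> V" for u
  proof -
    have "(i, u) \<in> (pos_edges V wE)\<^sup>*"
      using conn iV that unfolding pos_connected_def same_component_def by blast
    then show ?thesis
      using energy_eq_0_imp_rtrancl_eq[OF fin wE E0] fmin unfolding is_minimizer_def by simp
  qed
  then show False using minimizer_sum_sq[OF fmin] by simp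
qed

lemma laplacian_at_local_min:
  assumes fin: "finite V" and wE: "\<forall>u v. wE u v \<ge> 0"
    and min: "\<forall>v\<in>V. wE x v > 0 \<longrightarrow> g x \<le> g v"
  shows laplacian_nonpos_at_local_min: "laplacian V wE g x \<le> 0"
    and laplacian_nonneg_at_local_min_imp_flat:
      "laplacian V wE g x \<ge> 0 \<Longrightarrow> v \<in> V \<Longrightarrow> wE x v > 0 \<Longrightarrow> g v = g x"
proof -
  have terms: "\<forall>v\<in>V. wE x v * (g x - g v) \<le> 0"
    using min wE by (metis less_eq_real_def mult_nonneg_nonpos diff_le_0_iff_le mult_zero_left)
  then show "laplacian V wE g x \<le> 0" unfolding laplacian_def by (simp add: sum_nonpos)
  assume "laplacian V wE g x \<ge> 0" and v: "v \<in> V" "wE x v > 0"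
  then have "(\<Sum>v\<in>V. - (wE x v * (g x - g v))) = 0"
    using \<open>laplacian V wE g x \<le> 0\<close> unfolding laplacian_def sum_negf by simp
  then show "g v = g x"
    using terms fin v by (force simp: sum_nonneg_eq_0_iff)
qed

lemma same_component_edge:
  assumes sym: "\<forall>u v. wE u v = wE v u"
    and "same_component S wE u k" "v \<in> S" "wE u v > 0"
  shows "same_component S wE v k"
proof -
  have "(v, u) \<in> pos_edges S wE"
    using assms(2-4) sym[rule_format, of u v] unfolding same_component_def pos_edges_def by simp
  then show ?thesis using assms(2,3) unfolding same_component_def by (simp add: converse_rtrancl_into_rtrancl)
qed

lemma superharmonic_component_gt_cut_vertex:
  assumes fin: "finite V" and wE: "\<forall>u v. wE u v \<ge> 0" and sym: "\<forall>u v. wE u v = wE v u"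
    and super: "\<And>x. same_component (V - {j}) wE x k \<Longrightarrow> laplacian V wE g x \<ge> 0"
    and strict: "laplacian V wE g k > 0"
    and u: "same_component (V - {j}) wE u k"
  shows "g j < g u"
proof (rule ccontr)
  assume "\<not> g j < g u"
  define C where "C = {x. same_component (V - {j}) wE x k}"
  have "u \<in> C" using u unfolding C_def by simp
  moreover have "C \<subseteq> V" unfolding C_def same_component_def by auto
  ultimately have finC: "finite C" and neC: "C \<noteq> {}" using fin by (auto intro: finite_subset)
  define m where "m = Min (g ` C)"
  have m_le_C: "m \<le> g x" if "x \<in> C" for x unfolding m_def using finC that by simp
  have m_le: "m \<le> g x" if "x \<in> C \<or> x = j" for x
    using that m_le_C \<open>u \<in> C\<close> \<open>\<not> g j < g u\<close> by (metis not_less order_trans)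
  define M where "M = {x \<in> C. g x = m}"
  have local_min: "\<forall>v\<in>V. wE x v > 0 \<longrightarrow> g x \<le> g v" if "x \<in> M" for x
    using that m_le same_component_edge[OF sym] unfolding M_def C_def by blast
  have "pos_edges (V - {j}) wE `` M \<subseteq> M"
  proof
    fix z assume "z \<in> pos_edges (V - {j}) wE `` M"
    then obtain y where y: "y \<in> M" and z: "z \<in> V - {j}" "wE y z > 0"
      unfolding pos_edges_def by auto
    have "z \<in> C" using same_component_edge[OF sym _ z] y unfolding M_def C_def by simp
    moreover have "laplacian V wE g y \<ge> 0" using super y unfolding M_def C_def by simp
    then have "g z = g y"
      using laplacian_nonneg_at_local_min_imp_flat[OF fin wE local_min[OF y]] z by simp
    ultimately show "z \<in> M" using y unfolding M_def by simp
  qed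
  moreover have "k \<in> (pos_edges (V - {j}) wE)\<^sup>* `` M"
  proof -
    have "m \<in> g ` C" unfolding m_def using finC neC by (intro Min_in) auto
    then obtain x0 where "x0 \<in> M" unfolding M_def by auto
    moreover have "(x0, k) \<in> (pos_edges (V - {j}) wE)\<^sup>*"
      using \<open>x0 \<in> M\<close> unfolding M_def C_def same_component_def by simp
    ultimately show ?thesis by blast
  qed
  ultimately have "k \<in> M" using Image_closed_trancl by blast
  then show False using laplacian_nonpos_at_local_min[OF fin wE local_min] strict by fastforce
qed

lemma argmin_eq_singleton:
  fixes f :: "'a \<Rightarrow> 'b::linorder"
  assumes "finite N" "j \<in> N" "\<And>z. z \<in> N \<Longrightarrow> z \<noteq> j \<Longrightarrow> f j < f z"
  shows "{z \<in> N. f z = Min (f ` N)} = {j}"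
proof -
  have "Min (f ` N) = f j"
    using assms by (intro Min_eqI) (auto, metis less_imp_le order_refl)
  then show ?thesis using assms by fastforce
qed

theorem corollary11:
  fixes V :: "'a set" and wE :: "'a \<Rightarrow> 'a \<Rightarrow> real" and wV :: "'a \<Rightarrow> real"
    and i j k :: 'a and f :: "'a \<Rightarrow> real"
  assumes G: "weighted_graph V wE wV"
    and iV: "i \<in> V"
    and conn: "pos_connected V wE"
    and conn_i: "pos_connected (V - {i}) wE"
    and fmin: "is_minimizer V wE wV i f"
    and fpos: "\<forall>u\<in>V - {i}. f u > 0"
    and jV: "j \<in> V" and kV: "k \<in> V"
    and jk: "wE j k > 0"
    and disc: "\<not> pos_connected (V - {j}) wE"
    and sep: "i \<in> V - {j}" "k \<in> V - {j}" "\<not> same_component (V - {j}) wE i k"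
    and wk: "wV k > 0"
  shows "{z \<in> nbhd wE V k. f z = Min (f ` nbhd wE V k)} = {j}"
proof -
  have fin: "finite V" and sym: "\<forall>u v. wE u v = wE v u" and wE: "\<forall>u v. wE u v \<ge> 0"
    and wV: "\<forall>u. wV u \<ge> 0"
    using G unfolding weighted_graph_def by blast+
  have energy_pos: "energy V wE f > 0" using minimizer_energy_pos[OF fmin fin wE conn iV] .
  have comp: "x \<in> V" "x \<noteq> i" "f x > 0" if "same_component (V - {j}) wE x k" for x
    using that sep(3) fpos unfolding same_component_def by auto
  have EL: "laplacian V wE f x = energy V wE f * wV x * f x" if "same_component (V - {j}) wE x k" for x
    using minimizer_euler_lagrange[OF fmin fin sym wE comp(1,2)[OF that]] .
  have super: "laplacian V wE f x \<ge> 0" if "same_component (V - {j}) wE x k" for x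
    unfolding EL[OF that] using energy_pos wV comp(3)[OF that] by simp
  have k_comp: "same_component (V - {j}) wE k k" using sep(2) unfolding same_component_def by simp
  have strict: "laplacian V wE f k > 0"
    unfolding EL[OF k_comp] using energy_pos wk comp(3)[OF k_comp] by simp
  show ?thesis
  proof (rule argmin_eq_singleton)
    show "finite (nbhd wE V k)" using fin unfolding nbhd_def by simp
    show "j \<in> nbhd wE V k" using jV jk sym unfolding nbhd_def by simp
    fix z assume "z \<in> nbhd wE V k" "z \<noteq> j"
    then have "same_component (V - {j}) wE z k"
      using same_component_edge[OF sym k_comp] unfolding nbhd_def by simp
    then show "f j < f z"
      using superharmonic_component_gt_cut_vertex[OF fin wE sym super strict] by blast
  qed
qed

end
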